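(* Let $H$ be a Hilbert space and let $A=A^*$ be a linear selfadjoint operator in $H$, either bounded or densely defined and unbounded. Let $f\in H$ be such that the equation $Au=f$ is solvable (not necessarily uniquely), and let $y$ be its minimal-norm solution, i.e. the solution with $y\perp N:=\{u: Au=0\}$. For $\delta>0$ let $f_\delta\in H$ satisfy $\|f-f_\delta\|\le\delta$. Let $a=a(\delta)>0$ satisfy $\lim_{\delta\to 0}a(\delta)=0$ and $\lim_{\delta\to0}\frac{\delta}{a(\delta)}=0$. Then the equation $(A+ia(\delta))u=f_\delta$ has a unique solution $u_\delta$, and $$\lim_{\delta\to 0}\|u_\delta-y\|=0.$$
   Context: The problem $Au=f$ is assumed to be ill-posed; the data $f_\delta$ (noisy data) are given while $f$ is not known. *)

theory Defs
  imports "HOL-Analysis.Analysis"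
begin

text \<open>A complex Hilbert space is given explicitly on a carrier type 'a (an additive
abelian group) by a complex scalar multiplication sc and an inner product ip
(linear in the first argument, conjugate symmetric, positive definite),
complete with respect to the induced norm.\<close>

definition complex_inner_space ::
  "(complex \<Rightarrow> 'a::ab_group_add \<Rightarrow> 'a) \<Rightarrow> ('a \<Rightarrow> 'a \<Rightarrow> complex) \<Rightarrow> bool" where
  "complex_inner_space sc ip \<longleftrightarrow>
     (\<forall>c x y. sc c (x + y) = sc c x + sc c y) \<and>
     (\<forall>a b x. sc (a + b) x = sc a x + sc b x) \<and>
     (\<forall>a b x. sc a (sc b x) = sc (a * b) x) \<and>
     (\<forall>x. sc 1 x = x) \<and>
     (\<forall>x y z. ip (x + y) z = ip x z + ip y z) \<and>
     (\<forall>c x y. ip (sc c x) y = c * ip x y) \<and>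
     (\<forall>x y. ip y x = cnj (ip x y)) \<and>
     (\<forall>x. 0 \<le> Re (ip x x)) \<and>
     (\<forall>x. ip x x = 0 \<longrightarrow> x = 0)"

definition cnorm :: "('a \<Rightarrow> 'a \<Rightarrow> complex) \<Rightarrow> 'a \<Rightarrow> real" where
  "cnorm ip x = sqrt (Re (ip x x))"

definition complex_hilbert_space ::
  "(complex \<Rightarrow> 'a::ab_group_add \<Rightarrow> 'a) \<Rightarrow> ('a \<Rightarrow> 'a \<Rightarrow> complex) \<Rightarrow> bool" where
  "complex_hilbert_space sc ip \<longleftrightarrow> complex_inner_space sc ip \<and>
     (\<forall>X :: nat \<Rightarrow> 'a.
        (\<forall>e>0. \<exists>N. \<forall>m\<ge>N. \<forall>n\<ge>N. cnorm ip (X m - X n) < e) \<longrightarrow>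
        (\<exists>l. (\<lambda>n. cnorm ip (X n - l)) \<longlonglongrightarrow> 0))"

definition densely_defined_linear_op ::
  "(complex \<Rightarrow> 'a::ab_group_add \<Rightarrow> 'a) \<Rightarrow> ('a \<Rightarrow> 'a \<Rightarrow> complex) \<Rightarrow> 'a set \<Rightarrow> ('a \<Rightarrow> 'a) \<Rightarrow> bool" where
  "densely_defined_linear_op sc ip D A \<longleftrightarrow>
     0 \<in> D \<and> (\<forall>u\<in>D. \<forall>v\<in>D. u + v \<in> D) \<and> (\<forall>c. \<forall>u\<in>D. sc c u \<in> D) \<and>
     (\<forall>x. \<forall>e>0. \<exists>d\<in>D. cnorm ip (x - d) < e) \<and>
     (\<forall>u\<in>D. \<forall>v\<in>D. A (u + v) = A u + A v) \<and>
     (\<forall>c. \<forall>u\<in>D. A (sc c u) = sc c (A u))"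

definition adjoint_domain ::
  "('a \<Rightarrow> 'a \<Rightarrow> complex) \<Rightarrow> 'a set \<Rightarrow> ('a \<Rightarrow> 'a) \<Rightarrow> 'a set" where
  "adjoint_domain ip D A = {v. \<exists>w. \<forall>u\<in>D. ip (A u) v = ip u w}"

text \<open>A = A*: same domain, and A* v = A v for v in the domain
(the adjoint value is unique by density).\<close>

definition selfadjoint_op ::
  "(complex \<Rightarrow> 'a::ab_group_add \<Rightarrow> 'a) \<Rightarrow> ('a \<Rightarrow> 'a \<Rightarrow> complex) \<Rightarrow> 'a set \<Rightarrow> ('a \<Rightarrow> 'a) \<Rightarrow> bool" where
  "selfadjoint_op sc ip D A \<longleftrightarrow>
     densely_defined_linear_op sc ip D A \<and>
     adjoint_domain ip D A = D \<and>
     (\<forall>u\<in>D. \<forall>v\<in>D. ip (A u) v = ip u (A v))"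

end

(* Im <(A + i b) u, u> = b ||u||^2 gives |b| ||u|| <= ||(A + i b) u||, so A + i b is
   injective with closed range, and selfadjointness leaves no nonzero vector orthogonal
   to that range: A + i b is a bijection from the domain onto H.  With
   w_b = (A + i b)^-1 (i b y) one has u_delta - y = (A + i a)^-1 (f_delta - f) - w_a,
   whose first term has norm at most delta / a.  For every z in the domain,
   <y, w_b> = <y - A z, w_b> + <z, A w_b> and A w_b = i b (y - w_b) give
   ||w_b||^2 <= ||y - A z|| ||y|| + 2 |b| ||z|| ||y||; as y is orthogonal to the kernel,
   it lies in the closure of the range of A, hence w_b -> 0 as b -> 0. *)

theory Submission
  imports Defs
begin

section \<open>Complex inner product spaces\<close>

locale hilbert =
  fixes sc :: "complex \<Rightarrow> 'a::ab_group_add \<Rightarrow> 'a" and ip :: "'a \<Rightarrow> 'a \<Rightarrow> complex"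
  assumes hilbert: "complex_hilbert_space sc ip"
begin

lemma inner_space: "complex_inner_space sc ip"
  using hilbert unfolding complex_hilbert_space_def by (rule conjunct1)

lemma sc_add_right: "sc c (x + y) = sc c x + sc c y"
  and sc_add_left: "sc (c + d) x = sc c x + sc d x"
  and sc_sc [simp]: "sc c (sc d x) = sc (c * d) x"
  and sc_one [simp]: "sc 1 x = x"
  and ip_add_left: "ip (x + y) z = ip x z + ip y z"
  and ip_scale_left: "ip (sc c x) y = c * ip x y"
  and ip_cnj: "ip y x = cnj (ip x y)"
  and Re_ip_self_nonneg: "0 \<le> Re (ip x x)"
  and ip_self_eq_0: "ip x x = 0 \<Longrightarrow> x = 0"
  using inner_space unfolding complex_inner_space_def by meson+

lemma cauchy_converges:
  "(\<forall>e>0. \<exists>N. \<forall>m\<ge>N. \<forall>n\<ge>N. cnorm ip (X m - X n) < e) \<Longrightarrow> \<exists>l. (\<lambda>n. cnorm ip (X n - l)) \<longlonglongrightarrow> 0"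
  using hilbert unfolding complex_hilbert_space_def by blast

lemma ip_add_right: "ip x (y + z) = ip x y + ip x z"
  by (subst (1 2 3) ip_cnj) (simp add: ip_add_left)

lemma ip_scale_right: "ip x (sc c y) = cnj c * ip x y"
  by (subst (1 2) ip_cnj) (simp add: ip_scale_left)

lemma sc_diff_right: "sc c (x - y) = sc c x - sc c y"
  and sc_zero_right [simp]: "sc c 0 = 0"
proof -
  interpret additive "sc c" by unfold_locales (rule sc_add_right)
  show "sc c (x - y) = sc c x - sc c y" "sc c 0 = 0"
    by (rule diff zero)+
qed

lemma sc_minus_left: "sc (- c) x = - sc c x"
  and sc_zero_left [simp]: "sc 0 x = 0"
proof -
  interpret additive "\<lambda>c. sc c x" by unfold_locales (rule sc_add_left)
  show "sc (- c) x = - sc c x" "sc 0 x = 0"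
    by (rule minus zero)+
qed

lemma ip_diff_left: "ip (x - y) z = ip x z - ip y z"
  and ip_zero_left [simp]: "ip 0 z = 0"
proof -
  interpret additive "\<lambda>x. ip x z" by unfold_locales (rule ip_add_left)
  show "ip (x - y) z = ip x z - ip y z" "ip 0 z = 0"
    by (rule diff zero)+
qed

lemma ip_diff_right: "ip x (y - z) = ip x y - ip x z"
  and ip_zero_right [simp]: "ip x 0 = 0"
proof -
  interpret additive "ip x" by unfold_locales (rule ip_add_right)
  show "ip x (y - z) = ip x y - ip x z" "ip x 0 = 0"
    by (rule diff zero)+
qed

lemma cnorm_square: "(cnorm ip x)^2 = Re (ip x x)"
  by (simp add: cnorm_def Re_ip_self_nonneg)

lemma ip_self: "ip x x = complex_of_real ((cnorm ip x)^2)"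
proof -
  have "Im (ip x x) = 0"
    using arg_cong[OF ip_cnj[of x x], of Im] by simp
  then show ?thesis
    by (simp add: cnorm_square complex_eq_iff)
qed

lemma cnorm_nonneg: "0 \<le> cnorm ip x"
  by (simp add: cnorm_def Re_ip_self_nonneg)

lemma cnorm_eq_0_iff [simp]: "cnorm ip x = 0 \<longleftrightarrow> x = 0"
  using ip_self[of x] ip_self_eq_0[of x] by auto

lemma cnorm_zero [simp]: "cnorm ip 0 = 0"
  by simp

lemma cnorm_pos_iff: "0 < cnorm ip x \<longleftrightarrow> x \<noteq> 0"
  using cnorm_nonneg[of x] by (auto simp: less_le)

lemma cnorm_square_add_scale:
  "(cnorm ip (x + sc t y))^2 = (cnorm ip x)^2 + 2 * Re (cnj t * ip x y) + (cmod t)^2 * (cnorm ip y)^2"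
proof -
  have "ip (x + sc t y) (x + sc t y) = ip x x + (cnj t * ip x y + cnj (cnj t * ip x y)) + t * cnj t * ip y y"
    by (simp add: ip_add_left ip_add_right ip_scale_left ip_scale_right ip_cnj[of x y] algebra_simps)
  also have "cnj t * ip x y + cnj (cnj t * ip x y) = complex_of_real (2 * Re (cnj t * ip x y))"
    by (rule complex_add_cnj)
  also have "t * cnj t * ip y y = complex_of_real ((cmod t)^2 * (cnorm ip y)^2)"
    by (simp add: ip_self complex_norm_square[symmetric])
  finally show ?thesis
    by (simp add: cnorm_square)
qed

lemma cnorm_scale: "cnorm ip (sc t x) = cmod t * cnorm ip x"
proof -
  have "(cnorm ip (sc t x))^2 = (cmod t * cnorm ip x)^2"
    using cnorm_square_add_scale[of 0 t x] by (simp add: power_mult_distrib)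
  then show ?thesis
    by (simp add: cnorm_nonneg power2_eq_iff_nonneg)
qed

lemma cnorm_minus: "cnorm ip (- x) = cnorm ip x"
  using cnorm_scale[of "-1" x] by (simp add: sc_minus_left)

lemma cnorm_minus_commute: "cnorm ip (x - y) = cnorm ip (y - x)"
  by (metis cnorm_minus minus_diff_eq)

lemma cnorm_square_minus_projection:
  assumes "y \<noteq> 0"
  shows "(cnorm ip (x + sc (- ip x y / complex_of_real ((cnorm ip y)^2)) y))^2
    = (cnorm ip x)^2 - (cmod (ip x y))^2 / (cnorm ip y)^2"
proof -
  define Y where "Y = (cnorm ip y)^2"
  define c where "c = ip x y"
  define t where "t = - c / complex_of_real Y"
  have Y: "Y > 0"
    using assms by (simp add: Y_def cnorm_pos_iff)
  have cnj_t_c: "cnj t * c = - complex_of_real ((cmod c)^2 / Y)"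
  proof -
    have "cnj t * c = - (c * cnj c) / complex_of_real Y"
      by (simp add: t_def mult.commute)
    then show ?thesis
      by (simp only: complex_norm_square[symmetric]) simp
  qed
  have cmod_t: "(cmod t)^2 * Y = (cmod c)^2 / Y"
    using Y by (simp add: t_def norm_divide power_divide power2_eq_square)
  have "(cnorm ip (x + sc t y))^2 = (cnorm ip x)^2 + 2 * Re (cnj t * c) + (cmod t)^2 * Y"
    by (simp only: cnorm_square_add_scale c_def Y_def)
  also have "\<dots> = (cnorm ip x)^2 - (cmod c)^2 / Y"
    by (simp only: cnj_t_c cmod_t) simp
  finally show ?thesis
    by (simp only: t_def c_def Y_def)
qed

lemma cauchy_schwarz: "cmod (ip x y) \<le> cnorm ip x * cnorm ip y"
proof (cases "y = 0")
  case True
  then show ?thesis by simp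
next
  case False
  then have "(cmod (ip x y))^2 / (cnorm ip y)^2 \<le> (cnorm ip x)^2"
    using cnorm_square_minus_projection[of y x] zero_le_power2 by (metis diff_ge_0_iff_ge)
  then have "(cmod (ip x y))^2 \<le> (cnorm ip x * cnorm ip y)^2"
    using False by (simp add: pos_divide_le_eq cnorm_pos_iff power_mult_distrib)
  then show ?thesis
    by (rule power2_le_imp_le) (simp add: cnorm_nonneg)
qed

lemma cnorm_triangle: "cnorm ip (x + y) \<le> cnorm ip x + cnorm ip y"
proof -
  have "(cnorm ip (x + y))^2 = (cnorm ip x)^2 + 2 * Re (ip x y) + (cnorm ip y)^2"
    using cnorm_square_add_scale[of x 1 y] by simp
  also have "\<dots> \<le> (cnorm ip x + cnorm ip y)^2"
    using cauchy_schwarz[of x y] complex_Re_le_cmod[of "ip x y"] by (simp add: power2_sum)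
  finally show ?thesis
    by (rule power2_le_imp_le) (simp add: cnorm_nonneg add_nonneg_nonneg)
qed

lemma cnorm_triangle_diff: "cnorm ip (x - z) \<le> cnorm ip (x - y) + cnorm ip (y - z)"
  using cnorm_triangle[of "x - y" "y - z"] by simp

lemma cnorm_square_midpoint:
  "(cnorm ip (u - v))^2 = 2 * (cnorm ip (x - u))^2 + 2 * (cnorm ip (x - v))^2
     - 4 * (cnorm ip (x - sc (1/2) (u + v)))^2"
proof -
  have "(x - u) + (x - v) = sc 2 (x - sc (1/2) (u + v))"
    using sc_add_left[of 1 1 x] by (simp add: sc_diff_right)
  then have "(cnorm ip ((x - u) + (x - v)))^2 = 4 * (cnorm ip (x - sc (1/2) (u + v)))^2"
    by (simp add: cnorm_scale power_mult_distrib)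
  moreover have "(cnorm ip ((x - u) + (x - v)))^2
      = (cnorm ip (x - u))^2 + 2 * Re (ip (x - u) (x - v)) + (cnorm ip (x - v))^2"
    using cnorm_square_add_scale[of "x - u" 1 "x - v"] by simp
  moreover have "(cnorm ip (v - u))^2
      = (cnorm ip (x - u))^2 - 2 * Re (ip (x - u) (x - v)) + (cnorm ip (x - v))^2"
    using cnorm_square_add_scale[of "x - u" "-1" "x - v"] by (simp add: sc_minus_left)
  ultimately show ?thesis
    by (simp add: cnorm_minus_commute[of u v])
qed

lemma ip_tendsto_right:
  assumes "(\<lambda>n. cnorm ip (X n - l)) \<longlonglongrightarrow> 0"
  shows "(\<lambda>n. ip w (X n)) \<longlonglongrightarrow> ip w l"
proof -
  have "(\<lambda>n. ip w (X n) - ip w l) \<longlonglongrightarrow> 0"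
  proof (rule Lim_null_comparison)
    show "\<forall>\<^sub>F n in sequentially. norm (ip w (X n) - ip w l) \<le> cnorm ip w * cnorm ip (X n - l)"
      using cauchy_schwarz[of w] by (simp add: ip_diff_right[symmetric])
    show "(\<lambda>n. cnorm ip w * cnorm ip (X n - l)) \<longlonglongrightarrow> 0"
      using tendsto_mult_right_zero[OF assms] by simp
  qed
  then show ?thesis
    by (simp add: LIM_zero_iff)
qed

section \<open>Closed subspaces and nearest points\<close>

definition linear_subspace :: "'a set \<Rightarrow> bool" where
  "linear_subspace M \<longleftrightarrow> 0 \<in> M \<and> (\<forall>u\<in>M. \<forall>v\<in>M. u + v \<in> M) \<and> (\<forall>c. \<forall>u\<in>M. sc c u \<in> M)"

definition norm_closure :: "'a set \<Rightarrow> 'a set" where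
  "norm_closure M = {z. \<forall>e>0. \<exists>m\<in>M. cnorm ip (z - m) < e}"

lemma linear_subspace_diff:
  assumes "linear_subspace M" "u \<in> M" "v \<in> M"
  shows "u - v \<in> M"
proof -
  have "u + sc (-1) v \<in> M"
    using assms by (simp add: linear_subspace_def)
  then show ?thesis
    by (simp add: sc_minus_left)
qed

lemma subset_norm_closure: "M \<subseteq> norm_closure M"
  unfolding norm_closure_def by force

lemma tendsto_in_norm_closure:
  assumes "\<And>n. X n \<in> M" and "(\<lambda>n. cnorm ip (X n - z)) \<longlonglongrightarrow> 0"
  shows "z \<in> norm_closure M"
  unfolding norm_closure_def
proof (intro CollectI allI impI)
  fix e :: real
  assume "e > 0"
  then obtain N where "\<forall>n\<ge>N. cnorm ip (X n - z) < e"
    using order_tendstoD(2)[OF assms(2)] by (auto simp: eventually_sequentially)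
  then show "\<exists>m\<in>M. cnorm ip (z - m) < e"
    using assms(1) by (metis cnorm_minus_commute order_refl)
qed

lemma norm_closure_sequence:
  assumes "z \<in> norm_closure M"
  obtains X where "\<And>n. X n \<in> M" and "(\<lambda>n. cnorm ip (X n - z)) \<longlonglongrightarrow> 0"
proof -
  have "\<forall>n. \<exists>m\<in>M. cnorm ip (z - m) < inverse (Suc n)"
    using assms by (simp add: norm_closure_def)
  then obtain X where X: "\<And>n. X n \<in> M" "\<And>n. cnorm ip (z - X n) < inverse (Suc n)"
    by metis
  have "(\<lambda>n. cnorm ip (X n - z)) \<longlonglongrightarrow> 0"
  proof (rule Lim_null_comparison[OF _ LIMSEQ_inverse_real_of_nat])
    show "\<forall>\<^sub>F n in sequentially. norm (cnorm ip (X n - z)) \<le> inverse (Suc n)"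
      using X(2) by (simp add: cnorm_nonneg cnorm_minus_commute less_imp_le)
  qed
  with X(1) show ?thesis
    using that by blast
qed

lemma norm_closure_norm_closure: "norm_closure (norm_closure M) \<subseteq> norm_closure M"
proof
  fix z
  assume z: "z \<in> norm_closure (norm_closure M)"
  show "z \<in> norm_closure M"
    unfolding norm_closure_def
  proof (intro CollectI allI impI)
    fix e :: real
    assume e: "e > 0"
    obtain m where m: "m \<in> norm_closure M" "cnorm ip (z - m) < e / 2"
      using z e unfolding norm_closure_def[of "norm_closure M"] by (auto dest!: spec[of _ "e / 2"])
    obtain m' where m': "m' \<in> M" "cnorm ip (m - m') < e / 2"
      using m(1) e unfolding norm_closure_def by (auto dest!: spec[of _ "e / 2"])
    have "cnorm ip (z - m') < e"
      using cnorm_triangle_diff[of z m' m] m(2) m'(2) by linarith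
    with m'(1) show "\<exists>m\<in>M. cnorm ip (z - m) < e"
      by blast
  qed
qed

lemma linear_subspace_norm_closure:
  assumes M: "linear_subspace M"
  shows "linear_subspace (norm_closure M)"
proof -
  have "u + v \<in> norm_closure M" if u: "u \<in> norm_closure M" and v: "v \<in> norm_closure M" for u v
  proof -
    obtain X where X: "\<And>n. X n \<in> M" "(\<lambda>n. cnorm ip (X n - u)) \<longlonglongrightarrow> 0"
      using norm_closure_sequence[OF u] by blast
    obtain Y where Y: "\<And>n. Y n \<in> M" "(\<lambda>n. cnorm ip (Y n - v)) \<longlonglongrightarrow> 0"
      using norm_closure_sequence[OF v] by blast
    have "(\<lambda>n. cnorm ip ((X n + Y n) - (u + v))) \<longlonglongrightarrow> 0"
    proof (rule Lim_null_comparison[OF _ tendsto_add_zero[OF X(2) Y(2)]])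
      show "\<forall>\<^sub>F n in sequentially. norm (cnorm ip ((X n + Y n) - (u + v))) \<le> cnorm ip (X n - u) + cnorm ip (Y n - v)"
        using cnorm_triangle[of "X n - u" "Y n - v" for n] by (simp add: cnorm_nonneg algebra_simps)
    qed
    moreover have "X n + Y n \<in> M" for n
      using M X(1) Y(1) by (simp add: linear_subspace_def)
    ultimately show ?thesis
      by (rule tendsto_in_norm_closure[rotated])
  qed
  moreover have "sc c u \<in> norm_closure M" if u: "u \<in> norm_closure M" for c u
  proof -
    obtain X where X: "\<And>n. X n \<in> M" "(\<lambda>n. cnorm ip (X n - u)) \<longlonglongrightarrow> 0"
      using norm_closure_sequence[OF u] by blast
    have "(\<lambda>n. cnorm ip (sc c (X n) - sc c u)) \<longlonglongrightarrow> 0"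
      using tendsto_mult_right_zero[OF X(2), of "cmod c"] by (simp add: cnorm_scale flip: sc_diff_right)
    moreover have "sc c (X n) \<in> M" for n
      using M X(1) by (simp add: linear_subspace_def)
    ultimately show ?thesis
      by (rule tendsto_in_norm_closure[rotated])
  qed
  ultimately show ?thesis
    using M subset_norm_closure unfolding linear_subspace_def by blast
qed

lemma cauchy_converges_if_dist_le:
  assumes "\<And>m n. cnorm ip (X m - X n) \<le> r m + r n" and "r \<longlonglongrightarrow> 0"
  shows "\<exists>l. (\<lambda>n. cnorm ip (X n - l)) \<longlonglongrightarrow> 0"
proof (rule cauchy_converges, intro allI impI)
  fix e :: real
  assume "e > 0"
  then obtain N where N: "\<forall>n\<ge>N. r n < e / 2"
    using order_tendstoD(2)[OF assms(2), of "e / 2"] by (auto simp: eventually_sequentially)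
  have "cnorm ip (X m - X n) < e" if "m \<ge> N" "n \<ge> N" for m n
    using assms(1)[of m n] N[rule_format, OF that(1)] N[rule_format, OF that(2)] by linarith
  then show "\<exists>N. \<forall>m\<ge>N. \<forall>n\<ge>N. cnorm ip (X m - X n) < e"
    by blast
qed

lemma cnorm_diff_square_le_excess:
  assumes M: "linear_subspace M" and uv: "u \<in> M" "v \<in> M"
    and d: "0 \<le> d" "\<And>m. m \<in> M \<Longrightarrow> d \<le> cnorm ip (x - m)"
  shows "(cnorm ip (u - v))^2 \<le> 2 * ((cnorm ip (x - u))^2 - d^2) + 2 * ((cnorm ip (x - v))^2 - d^2)"
proof -
  have "sc (1/2) (u + v) \<in> M"
    using M uv by (simp add: linear_subspace_def)
  then have "d^2 \<le> (cnorm ip (x - sc (1/2) (u + v)))^2"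
    using d by (blast intro: power_mono)
  then show ?thesis
    using cnorm_square_midpoint[of u v x] by (simp only: right_diff_distrib)
qed

lemma minimizing_sequence_converges:
  assumes M: "linear_subspace M" and X: "\<And>n. X n \<in> M"
    and d: "0 \<le> d" "\<And>z. z \<in> M \<Longrightarrow> d \<le> cnorm ip (x - z)"
    and r: "\<And>n. cnorm ip (x - X n) \<le> d + r n" "\<And>n. 0 \<le> r n" "r \<longlonglongrightarrow> 0"
  shows "\<exists>p. (\<lambda>n. cnorm ip (X n - p)) \<longlonglongrightarrow> 0"
proof -
  define s where "s n = (d + r n)^2 - d^2" for n
  have s_nonneg: "0 \<le> s n" for n
    using d(1) r(2)[of n] by (simp add: s_def power_mono)
  have "cnorm ip (X m - X n) \<le> sqrt (2 * s m) + sqrt (2 * s n)" for m n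
  proof -
    have "(cnorm ip (x - X k))^2 \<le> d^2 + s k" for k
      using power_mono[OF r(1)[of k] cnorm_nonneg] by (simp add: s_def)
    moreover have "(cnorm ip (X m - X n))^2
        \<le> 2 * ((cnorm ip (x - X m))^2 - d^2) + 2 * ((cnorm ip (x - X n))^2 - d^2)"
      by (rule cnorm_diff_square_le_excess[OF M X X d(1)]) (rule d(2))
    ultimately have "(cnorm ip (X m - X n))^2 \<le> 2 * s m + 2 * s n"
      by (smt (verit))
    then have "cnorm ip (X m - X n) \<le> sqrt (2 * s m + 2 * s n)"
      by (simp add: real_le_rsqrt)
    also have "\<dots> \<le> sqrt (2 * s m) + sqrt (2 * s n)"
      using s_nonneg by (simp add: sqrt_add_le_add_sqrt)
    finally show ?thesis .
  qed
  moreover have "(\<lambda>n. sqrt (2 * s n)) \<longlonglongrightarrow> sqrt (2 * ((d + 0)^2 - d^2))"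
    unfolding s_def by (intro tendsto_intros r(3))
  ultimately show ?thesis
    using cauchy_converges_if_dist_le by force
qed

lemma nearest_point_exists:
  assumes M: "linear_subspace M" "norm_closure M \<subseteq> M"
  obtains p where "p \<in> M" and "\<And>m. m \<in> M \<Longrightarrow> cnorm ip (x - p) \<le> cnorm ip (x - m)"
proof -
  define d where "d = (INF m\<in>M. cnorm ip (x - m))"
  have M_ne: "M \<noteq> {}"
    using M(1) by (auto simp: linear_subspace_def)
  have bdd: "bdd_below ((\<lambda>m. cnorm ip (x - m)) ` M)"
    by (rule bdd_belowI2[of _ 0]) (rule cnorm_nonneg)
  have d_le: "d \<le> cnorm ip (x - m)" if "m \<in> M" for m
    unfolding d_def using bdd that by (rule cINF_lower)
  have d_nonneg: "0 \<le> d"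
    unfolding d_def using M_ne by (rule cINF_greatest) (rule cnorm_nonneg)
  have "\<exists>m\<in>M. cnorm ip (x - m) < d + inverse (Suc n)" for n
    using cINF_less_iff[OF M_ne bdd, of "d + inverse (Suc n)"] unfolding d_def[symmetric] by simp
  then obtain X where X: "\<And>n. X n \<in> M" "\<And>n. cnorm ip (x - X n) < d + inverse (Suc n)"
    by metis
  obtain p where p: "(\<lambda>n. cnorm ip (X n - p)) \<longlonglongrightarrow> 0"
    using minimizing_sequence_converges[OF M(1) X(1) d_nonneg d_le less_imp_le[OF X(2)]]
      LIMSEQ_inverse_real_of_nat by force
  have "p \<in> M"
    using tendsto_in_norm_closure[OF X(1) p] M(2) by blast
  moreover have "cnorm ip (x - p) \<le> d + 0 + 0"
  proof (rule LIMSEQ_le_const)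
    show "(\<lambda>n. d + inverse (Suc n) + cnorm ip (X n - p)) \<longlonglongrightarrow> d + 0 + 0"
      by (intro tendsto_intros LIMSEQ_inverse_real_of_nat p)
    have "cnorm ip (x - p) \<le> d + inverse (Suc n) + cnorm ip (X n - p)" for n
      using X(2)[of n] cnorm_triangle_diff[of x p "X n"] by linarith
    then show "\<exists>N. \<forall>n\<ge>N. cnorm ip (x - p) \<le> d + inverse (Suc n) + cnorm ip (X n - p)"
      by blast
  qed
  ultimately show ?thesis
    using that d_le by force
qed

lemma nearest_point_orthogonal:
  assumes M: "linear_subspace M" and p: "p \<in> M"
    and nearest: "\<And>m. m \<in> M \<Longrightarrow> cnorm ip (x - p) \<le> cnorm ip (x - m)" and m: "m \<in> M"
  shows "ip (x - p) m = 0"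
proof (cases "m = 0")
  case True
  then show ?thesis by simp
next
  case False
  define t where "t = - ip (x - p) m / complex_of_real ((cnorm ip m)^2)"
  have "p + sc (- t) m \<in> M"
    using M p m by (simp add: linear_subspace_def)
  moreover have "x - (p + sc (- t) m) = (x - p) + sc t m"
    by (simp add: sc_minus_left)
  ultimately have "cnorm ip (x - p) \<le> cnorm ip ((x - p) + sc t m)"
    using nearest by metis
  then have "(cnorm ip (x - p))^2 \<le> (cnorm ip ((x - p) + sc t m))^2"
    by (rule power_mono) (rule cnorm_nonneg)
  then have "(cmod (ip (x - p) m))^2 / (cnorm ip m)^2 \<le> 0"
    using cnorm_square_minus_projection[OF False, of "x - p"] by (simp add: t_def)
  then show ?thesis
    using False by (simp add: divide_le_0_iff cnorm_pos_iff)
qed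

lemma mem_closed_subspace_if_orthogonal_to_complement:
  assumes M: "linear_subspace M" "norm_closure M \<subseteq> M"
    and perp: "\<And>v. \<forall>m\<in>M. ip v m = 0 \<Longrightarrow> ip v x = 0"
  shows "x \<in> M"
proof -
  obtain p where p: "p \<in> M" "\<And>m. m \<in> M \<Longrightarrow> cnorm ip (x - p) \<le> cnorm ip (x - m)"
    using nearest_point_exists[OF M] by blast
  have "\<forall>m\<in>M. ip (x - p) m = 0"
    using nearest_point_orthogonal[OF M(1) p] by blast
  then have "ip (x - p) (x - p) = 0"
    using perp p(1) by (simp add: ip_diff_right)
  then show ?thesis
    using p(1) ip_self_eq_0 by force
qed

end

section \<open>Selfadjoint operators and the shifted operator \<open>A + i b\<close>\<close>

locale selfadjoint = hilbert +
  fixes D :: "'a set" and A :: "'a \<Rightarrow> 'a"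
  assumes selfadjoint: "selfadjoint_op sc ip D A"
begin

lemma linear_subspace_domain: "linear_subspace D"
  using selfadjoint by (simp add: selfadjoint_op_def densely_defined_linear_op_def linear_subspace_def)

lemma norm_closure_domain: "norm_closure D = UNIV"
  using selfadjoint by (simp add: selfadjoint_op_def densely_defined_linear_op_def norm_closure_def)

lemma A_add: "u \<in> D \<Longrightarrow> v \<in> D \<Longrightarrow> A (u + v) = A u + A v"
  and A_scale: "u \<in> D \<Longrightarrow> A (sc c u) = sc c (A u)"
  and A_symmetric: "u \<in> D \<Longrightarrow> v \<in> D \<Longrightarrow> ip (A u) v = ip u (A v)"
  using selfadjoint by (simp_all add: selfadjoint_op_def densely_defined_linear_op_def)

lemma mem_domainI:
  assumes "\<And>u. u \<in> D \<Longrightarrow> ip (A u) v = ip u w"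
  shows "v \<in> D"
proof -
  have "v \<in> adjoint_domain ip D A"
    using assms by (auto simp: adjoint_domain_def)
  then show ?thesis
    using selfadjoint by (simp add: selfadjoint_op_def)
qed

lemma domain_diff: "u \<in> D \<Longrightarrow> v \<in> D \<Longrightarrow> u - v \<in> D"
  by (rule linear_subspace_diff[OF linear_subspace_domain])

lemma A_diff: "u \<in> D \<Longrightarrow> v \<in> D \<Longrightarrow> A (u - v) = A u - A v"
  using A_add[of "u - v" v] domain_diff by (simp add: eq_diff_eq)

lemma eq_0_if_orthogonal_domain:
  assumes "\<And>u. u \<in> D \<Longrightarrow> ip u w = 0"
  shows "w = 0"
proof -
  obtain X where X: "\<And>n. X n \<in> D" "(\<lambda>n. cnorm ip (X n - w)) \<longlonglongrightarrow> 0"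
    using norm_closure_sequence[of w D] norm_closure_domain by blast
  have "(\<lambda>n. ip w (X n)) \<longlonglongrightarrow> ip w w"
    by (rule ip_tendsto_right[OF X(2)])
  moreover have "ip w (X n) = 0" for n
    using assms[OF X(1)] ip_cnj[of "X n" w] by simp
  ultimately have "ip w w = 0"
    by (simp add: LIMSEQ_const_iff)
  then show ?thesis
    by (rule ip_self_eq_0)
qed

lemma A_closed:
  assumes U: "\<And>n. U n \<in> D" "(\<lambda>n. cnorm ip (U n - u)) \<longlonglongrightarrow> 0"
    and AU: "(\<lambda>n. cnorm ip (A (U n) - h)) \<longlonglongrightarrow> 0"
  shows "u \<in> D" and "A u = h"
proof -
  have ip_A_u: "ip (A v) u = ip v h" if v: "v \<in> D" for v
  proof -
    have "(\<lambda>n. ip (A v) (U n)) \<longlonglongrightarrow> ip (A v) u"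
      by (rule ip_tendsto_right[OF U(2)])
    moreover have "(\<lambda>n. ip (A v) (U n)) \<longlonglongrightarrow> ip v h"
      using ip_tendsto_right[OF AU, of v] A_symmetric[OF v U(1)] by simp
    ultimately show ?thesis
      by (rule LIMSEQ_unique)
  qed
  then show u: "u \<in> D"
    by (rule mem_domainI)
  have "ip v (A u - h) = 0" if "v \<in> D" for v
    using ip_A_u[OF that] A_symmetric[OF that u] by (simp add: ip_diff_right)
  then have "A u - h = 0"
    by (rule eq_0_if_orthogonal_domain)
  then show "A u = h"
    by simp
qed

definition shifted :: "real \<Rightarrow> 'a \<Rightarrow> 'a" where
  "shifted b u = A u + sc (\<i> * complex_of_real b) u"

lemma shifted_diff: "u \<in> D \<Longrightarrow> v \<in> D \<Longrightarrow> shifted b (u - v) = shifted b u - shifted b v"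
  by (simp add: shifted_def A_diff sc_diff_right)

lemma shifted_add: "u \<in> D \<Longrightarrow> v \<in> D \<Longrightarrow> shifted b (u + v) = shifted b u + shifted b v"
  by (simp add: shifted_def A_add sc_add_right)

lemma shifted_scale: "u \<in> D \<Longrightarrow> shifted b (sc c u) = sc c (shifted b u)"
  by (simp add: shifted_def A_scale sc_add_right mult.commute)

lemma Im_ip_shifted_self: "u \<in> D \<Longrightarrow> Im (ip (shifted b u) u) = b * (cnorm ip u)^2"
proof -
  assume u: "u \<in> D"
  have "Im (ip (A u) u) = 0"
    using arg_cong[OF A_symmetric[OF u u], of Im] ip_cnj[of u "A u"] by simp
  then show ?thesis
    by (simp add: shifted_def ip_add_left ip_scale_left ip_self)
qed

lemma shifted_lower_bound:
  assumes u: "u \<in> D"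
  shows "\<bar>b\<bar> * cnorm ip u \<le> cnorm ip (shifted b u)"
proof (cases "u = 0")
  case True
  then show ?thesis by (simp add: cnorm_nonneg)
next
  case False
  have "\<bar>b\<bar> * cnorm ip u * cnorm ip u = \<bar>Im (ip (shifted b u) u)\<bar>"
    by (simp add: Im_ip_shifted_self[OF u] abs_mult power2_eq_square)
  also have "\<dots> \<le> cnorm ip (shifted b u) * cnorm ip u"
    using abs_Im_le_cmod cauchy_schwarz order_trans by blast
  finally show ?thesis
    using False by (simp add: cnorm_pos_iff)
qed

lemma shifted_inj:
  assumes "b \<noteq> 0" "u \<in> D" "v \<in> D" "shifted b u = shifted b v"
  shows "u = v"
  using shifted_lower_bound[OF domain_diff[OF assms(2,3)], of b] assms
  by (simp add: shifted_diff mult_le_0_iff cnorm_nonneg order_antisym_conv)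

lemma range_shifted_closed:
  assumes b: "b \<noteq> 0"
  shows "norm_closure (shifted b ` D) \<subseteq> shifted b ` D"
proof
  fix g
  assume "g \<in> norm_closure (shifted b ` D)"
  then obtain X where "\<And>n. X n \<in> shifted b ` D" and X: "(\<lambda>n. cnorm ip (X n - g)) \<longlonglongrightarrow> 0"
    using norm_closure_sequence by blast
  then have "\<forall>n. \<exists>u. u \<in> D \<and> X n = shifted b u"
    by blast
  then obtain U where U: "\<And>n. U n \<in> D" and XU: "\<And>n. X n = shifted b (U n)"
    by metis
  \<comment> \<open>the lower bound makes \<open>U\<close> Cauchy along with \<open>shifted b \<circ> U\<close>\<close>
  have dist_U: "cnorm ip (U m - U n) \<le> cnorm ip (X m - g) / \<bar>b\<bar> + cnorm ip (X n - g) / \<bar>b\<bar>" for m n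
  proof -
    have "\<bar>b\<bar> * cnorm ip (U m - U n) \<le> cnorm ip (X m - X n)"
      using shifted_lower_bound[OF domain_diff[OF U U]] by (simp add: XU shifted_diff U)
    also have "\<dots> \<le> cnorm ip (X m - g) + cnorm ip (X n - g)"
      using cnorm_triangle_diff[of "X m" "X n" g] cnorm_minus_commute[of g "X n"] by simp
    finally show ?thesis
      using b by (simp add: field_simps)
  qed
  moreover have "(\<lambda>n. cnorm ip (X n - g) / \<bar>b\<bar>) \<longlonglongrightarrow> 0"
    using tendsto_divide_zero[OF X] by simp
  ultimately obtain u where u: "(\<lambda>n. cnorm ip (U n - u)) \<longlonglongrightarrow> 0"
    by (metis cauchy_converges_if_dist_le)
  define ib where "ib = \<i> * complex_of_real b"
  have A_U: "A (U n) - (g - sc ib u) = (X n - g) + sc (- ib) (U n - u)" for n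
    by (simp add: XU shifted_def ib_def sc_diff_right sc_minus_left algebra_simps)
  have "cmod (- ib) = \<bar>b\<bar>"
    by (simp add: ib_def norm_mult)
  then have "cnorm ip (A (U n) - (g - sc ib u)) \<le> cnorm ip (X n - g) + \<bar>b\<bar> * cnorm ip (U n - u)" for n
    unfolding A_U using cnorm_triangle[of "X n - g" "sc (- ib) (U n - u)"] by (simp only: cnorm_scale)
  then have "(\<lambda>n. cnorm ip (A (U n) - (g - sc ib u))) \<longlonglongrightarrow> 0"
    by (intro Lim_null_comparison[OF _ tendsto_add_zero[OF X tendsto_mult_right_zero[OF u, of "\<bar>b\<bar>"]]])
      (simp add: cnorm_nonneg)
  then have "u \<in> D" and "A u = g - sc ib u"
    using A_closed[OF U u] by blast+
  then show "g \<in> shifted b ` D"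
    by (force simp: shifted_def ib_def)
qed

lemma linear_subspace_range_shifted: "linear_subspace (shifted b ` D)"
proof -
  have D: "0 \<in> D" "\<And>u v. u \<in> D \<Longrightarrow> v \<in> D \<Longrightarrow> u + v \<in> D" "\<And>c u. u \<in> D \<Longrightarrow> sc c u \<in> D"
    using linear_subspace_domain by (simp_all add: linear_subspace_def)
  have "shifted b 0 = 0"
    using shifted_diff[OF D(1) D(1), of b] by simp
  then have "0 \<in> shifted b ` D"
    using D(1) by (metis image_eqI)
  moreover have "shifted b u + shifted b v \<in> shifted b ` D" if "u \<in> D" "v \<in> D" for u v
    using shifted_add[OF that] D(2)[OF that] by (metis image_eqI)
  moreover have "sc c (shifted b u) \<in> shifted b ` D" if "u \<in> D" for c u
    using shifted_scale[OF that] D(3)[OF that] by (metis image_eqI)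
  ultimately show ?thesis
    unfolding linear_subspace_def by blast
qed

lemma orthogonal_range_shifted:
  assumes b: "b \<noteq> 0" and v: "\<And>u. u \<in> D \<Longrightarrow> ip v (shifted b u) = 0"
  shows "v = 0"
proof -
  define ib where "ib = \<i> * complex_of_real b"
  have "ip (A u) v = ip u (sc ib v)" if u: "u \<in> D" for u
  proof -
    have "ip (shifted b u) v = 0"
      using v[OF u] ip_cnj[of "shifted b u" v] by simp
    then have "ip (A u) v + ib * ip u v = 0"
      by (simp add: shifted_def ib_def ip_add_left ip_scale_left)
    then show ?thesis
      by (simp add: ip_scale_right ib_def eq_neg_iff_add_eq_0[symmetric])
  qed
  then have vD: "v \<in> D"
    by (rule mem_domainI)
  have "b * (cnorm ip v)^2 = 0"
    using Im_ip_shifted_self[OF vD, of b] v[OF vD] ip_cnj[of "shifted b v" v] by simp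
  then show ?thesis
    using b by simp
qed

lemma range_shifted:
  assumes b: "b \<noteq> 0"
  shows "shifted b ` D = UNIV"
proof -
  have "g \<in> shifted b ` D" for g
  proof (rule mem_closed_subspace_if_orthogonal_to_complement
      [OF linear_subspace_range_shifted range_shifted_closed[OF b]])
    fix v
    assume "\<forall>m\<in>shifted b ` D. ip v m = 0"
    then have "v = 0"
      using orthogonal_range_shifted[OF b] by blast
    then show "ip v g = 0"
      by simp
  qed
  then show ?thesis
    by blast
qed

lemma shifted_ex1:
  assumes b: "b \<noteq> 0"
  shows "\<exists>!u. u \<in> D \<and> shifted b u = g"
proof -
  have "g \<in> shifted b ` D"
    using range_shifted[OF b] by simp
  then obtain u where "u \<in> D" "shifted b u = g"
    by blast
  then show ?thesis
    using shifted_inj[OF b] by blast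
qed

definition shifted_inv :: "real \<Rightarrow> 'a \<Rightarrow> 'a" where
  "shifted_inv b g = (THE u. u \<in> D \<and> shifted b u = g)"

lemma shifted_inv_in_domain: "b \<noteq> 0 \<Longrightarrow> shifted_inv b g \<in> D"
  and shifted_shifted_inv: "b \<noteq> 0 \<Longrightarrow> shifted b (shifted_inv b g) = g"
  using theI'[OF shifted_ex1, of b g] by (simp_all add: shifted_inv_def)

lemma shifted_inv_shifted: "b \<noteq> 0 \<Longrightarrow> u \<in> D \<Longrightarrow> shifted_inv b (shifted b u) = u"
  using shifted_inv_in_domain shifted_shifted_inv shifted_inj by blast

lemma shifted_inv_diff: "b \<noteq> 0 \<Longrightarrow> shifted_inv b (g - h) = shifted_inv b g - shifted_inv b h"
  using shifted_inv_shifted[of b "shifted_inv b g - shifted_inv b h"] shifted_inv_in_domain[of b] shifted_shifted_inv[of b] domain_diff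
  by (simp add: shifted_diff)

lemma shifted_inv_norm_le: "b \<noteq> 0 \<Longrightarrow> \<bar>b\<bar> * cnorm ip (shifted_inv b g) \<le> cnorm ip g"
  using shifted_lower_bound[of "shifted_inv b g" b] shifted_inv_in_domain[of b g] shifted_shifted_inv[of b g] by simp

section \<open>Convergence of the regularized solutions\<close>

lemma orthogonal_kernel_in_closure_range:
  assumes y: "\<And>u. u \<in> D \<Longrightarrow> A u = 0 \<Longrightarrow> ip u y = 0"
  shows "y \<in> norm_closure (A ` D)"
proof (rule mem_closed_subspace_if_orthogonal_to_complement)
  have "A ` D = shifted 0 ` D"
    by (simp add: shifted_def)
  then show "linear_subspace (norm_closure (A ` D))"
    using linear_subspace_norm_closure linear_subspace_range_shifted by metis
  show "norm_closure (norm_closure (A ` D)) \<subseteq> norm_closure (A ` D)"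
    by (rule norm_closure_norm_closure)
  fix v
  assume v: "\<forall>m\<in>norm_closure (A ` D). ip v m = 0"
  have A_v: "ip (A u) v = ip u 0" if u: "u \<in> D" for u
  proof -
    have "ip v (A u) = 0"
      using v subset_norm_closure u by blast
    then show ?thesis
      using ip_cnj[of "A u" v] by simp
  qed
  then have vD: "v \<in> D"
    by (rule mem_domainI)
  have "ip u (A v) = 0" if "u \<in> D" for u
    using A_v[OF that] A_symmetric[OF that vD] by simp
  then have "A v = 0"
    by (rule eq_0_if_orthogonal_domain)
  then show "ip v y = 0"
    using y[OF vD] by simp
qed

lemma shifted_solution_cnorm_square:
  assumes b: "b \<noteq> 0" and w: "w \<in> D" "shifted b w = sc (\<i> * complex_of_real b) y"
  shows "(cnorm ip w)^2 = Re (ip y w)"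
proof -
  have "b * (cnorm ip w)^2 = Im (ip (shifted b w) w)"
    by (simp add: Im_ip_shifted_self[OF w(1)])
  also have "\<dots> = b * Re (ip y w)"
    by (simp add: w(2) ip_scale_left)
  finally show ?thesis
    using b by simp
qed

lemma shifted_solution_cnorm_le:
  assumes b: "b \<noteq> 0" and w: "w \<in> D" "shifted b w = sc (\<i> * complex_of_real b) y"
  shows "cnorm ip w \<le> cnorm ip y"
proof -
  have "cnorm ip w * cnorm ip w \<le> cnorm ip y * cnorm ip w"
    using shifted_solution_cnorm_square[OF assms] complex_Re_le_cmod[of "ip y w"] cauchy_schwarz[of y w]
    by (simp add: power2_eq_square)
  then show ?thesis
    using cnorm_nonneg[of w] by (cases "w = 0") (simp_all add: cnorm_nonneg cnorm_pos_iff)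
qed

lemma shifted_solution_cnorm_square_le:
  assumes b: "b \<noteq> 0" and w: "w \<in> D" "shifted b w = sc (\<i> * complex_of_real b) y" and z: "z \<in> D"
  shows "(cnorm ip w)^2 \<le> cnorm ip (y - A z) * cnorm ip y + 2 * \<bar>b\<bar> * cnorm ip z * cnorm ip y"
proof -
  define ib where "ib = \<i> * complex_of_real b"
  have w_y: "cnorm ip w \<le> cnorm ip y"
    by (rule shifted_solution_cnorm_le[OF assms(1-3)])
  have "A w = sc ib (y - w)"
    using w(2) by (simp add: shifted_def ib_def sc_diff_right eq_diff_eq)
  then have "ip y w = ip (y - A z) w + ip z (sc ib (y - w))"
    using A_symmetric[OF z w(1)] by (simp add: ip_diff_left)
  then have "cmod (ip y w) \<le> cnorm ip (y - A z) * cnorm ip w + cnorm ip z * (\<bar>b\<bar> * cnorm ip (y - w))"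
    using cauchy_schwarz[of "y - A z" w] cauchy_schwarz[of z "sc ib (y - w)"]
      norm_triangle_ineq[of "ip (y - A z) w" "ip z (sc ib (y - w))"]
    by (simp add: cnorm_scale ib_def norm_mult)
  also have "\<dots> \<le> cnorm ip (y - A z) * cnorm ip y + cnorm ip z * (\<bar>b\<bar> * (2 * cnorm ip y))"
  proof (intro add_mono mult_left_mono)
    show "cnorm ip (y - w) \<le> 2 * cnorm ip y"
      using cnorm_triangle[of y "- w"] w_y by (simp add: cnorm_minus)
  qed (simp_all add: w_y cnorm_nonneg)
  finally show ?thesis
    using shifted_solution_cnorm_square[OF assms(1-3)] complex_Re_le_cmod[of "ip y w"]
    by (simp add: algebra_simps)
qed

lemma shifted_solution_tendsto_0:
  assumes y: "y \<in> norm_closure (A ` D)"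
  shows "((\<lambda>b. cnorm ip (shifted_inv b (sc (\<i> * complex_of_real b) y))) \<longlongrightarrow> 0) (at 0)"
proof (rule tendstoI)
  fix e :: real
  assume e: "e > 0"
  have y1: "cnorm ip y + 1 > 0"
    using cnorm_nonneg[of y] by simp
  define e' where "e' = e^2 / 2 / (cnorm ip y + 1)"
  have "e' > 0"
    using e y1 by (simp add: e'_def)
  then obtain z where z: "z \<in> D" "cnorm ip (y - A z) < e'"
    using y by (auto simp: norm_closure_def)
  have "cnorm ip (y - A z) * cnorm ip y \<le> e' * cnorm ip y"
    using z(2) by (simp add: mult_right_mono cnorm_nonneg)
  also have "\<dots> < e' * (cnorm ip y + 1)"
    using \<open>e' > 0\<close> by simp
  also have "\<dots> = e^2 / 2"
    using y1 unfolding e'_def by (simp add: field_simps)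
  finally have approx: "cnorm ip (y - A z) * cnorm ip y < e^2 / 2" .
  have "((\<lambda>b. 2 * \<bar>b\<bar> * cnorm ip z * cnorm ip y) \<longlongrightarrow> 0) (at 0)"
    by (auto intro!: tendsto_eq_intros)
  moreover have "0 < e^2 / 2"
    using e by simp
  ultimately have "\<forall>\<^sub>F b in at 0. 2 * \<bar>b\<bar> * cnorm ip z * cnorm ip y < e^2 / 2"
    by (rule order_tendstoD(2))
  with eventually_neq_at_within[of 0 0 UNIV]
  show "\<forall>\<^sub>F b in at 0. dist (cnorm ip (shifted_inv b (sc (\<i> * complex_of_real b) y))) 0 < e"
  proof eventually_elim
    case (elim b)
    define w where "w = shifted_inv b (sc (\<i> * complex_of_real b) y)"
    have "(cnorm ip w)^2 < e^2"
      using shifted_solution_cnorm_square_le[OF elim(1) shifted_inv_in_domain[OF elim(1)] shifted_shifted_inv[OF elim(1), of "sc (\<i> * complex_of_real b) y"] z(1)] approx elim(2)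
      unfolding w_def by linarith
    then have "cnorm ip w < e"
      using e by (rule power2_less_imp_less[OF _ less_imp_le])
    then show ?case
      by (simp add: w_def cnorm_nonneg)
  qed
qed

lemma shifted_inv_error_le:
  assumes b: "b \<noteq> 0" and y: "y \<in> D"
  shows "cnorm ip (shifted_inv b g - y)
    \<le> cnorm ip (g - A y) / \<bar>b\<bar> + cnorm ip (shifted_inv b (sc (\<i> * complex_of_real b) y))"
proof -
  define ib where "ib = \<i> * complex_of_real b"
  have "y = shifted_inv b (A y + sc ib y)"
    using shifted_inv_shifted[OF b y] by (simp add: shifted_def ib_def)
  then have "shifted_inv b g - y = shifted_inv b (g - A y) - shifted_inv b (sc ib y)"
    using shifted_inv_diff[OF b] by (metis diff_diff_eq)
  then have "cnorm ip (shifted_inv b g - y) \<le> cnorm ip (shifted_inv b (g - A y)) + cnorm ip (shifted_inv b (sc ib y))"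
    using cnorm_triangle[of "shifted_inv b (g - A y)" "- shifted_inv b (sc ib y)"] by (simp add: cnorm_minus)
  moreover have "cnorm ip (shifted_inv b (g - A y)) \<le> cnorm ip (g - A y) / \<bar>b\<bar>"
    using shifted_inv_norm_le[OF b] b by (simp add: field_simps)
  ultimately show ?thesis
    by (simp add: ib_def)
qed

end

theorem theorem1:
  fixes sc :: "complex \<Rightarrow> 'a::ab_group_add \<Rightarrow> 'a"
    and ip :: "'a \<Rightarrow> 'a \<Rightarrow> complex"
    and D :: "'a set" and A :: "'a \<Rightarrow> 'a"
    and f y :: 'a and fd :: "real \<Rightarrow> 'a" and a :: "real \<Rightarrow> real"
  assumes H: "complex_hilbert_space sc ip"
    and SA: "selfadjoint_op sc ip D A"
    and solvable: "\<exists>u\<in>D. A u = f"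
    and y_sol: "y \<in> D" "A y = f"
    and y_perp: "\<forall>u\<in>D. A u = 0 \<longrightarrow> ip u y = 0"
    and fd: "\<forall>\<delta>>0. cnorm ip (f - fd \<delta>) \<le> \<delta>"
    and a_pos: "\<forall>\<delta>>0. a \<delta> > 0"
    and a_lim: "(a \<longlongrightarrow> 0) (at_right 0)"
    and da_lim: "((\<lambda>\<delta>. \<delta> / a \<delta>) \<longlongrightarrow> 0) (at_right 0)"
  shows "(\<forall>\<delta>>0. \<exists>!u. u \<in> D \<and> A u + sc (\<i> * complex_of_real (a \<delta>)) u = fd \<delta>) \<and>
         ((\<lambda>\<delta>. cnorm ip ((THE u. u \<in> D \<and> A u + sc (\<i> * complex_of_real (a \<delta>)) u = fd \<delta>) - y))
            \<longlongrightarrow> 0) (at_right 0)"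
proof -
  interpret selfadjoint sc ip D A
    using H SA by unfold_locales
  define w where "w b = cnorm ip (shifted_inv b (sc (\<i> * complex_of_real b) y))" for b
  have "\<forall>\<^sub>F \<delta> in at_right 0. a \<delta> \<noteq> 0"
    using eventually_at_right_less[of 0] by eventually_elim (use a_pos in auto)
  then have a_at_0: "filterlim a (at 0) (at_right 0)"
    using a_lim by (simp add: filterlim_at)
  have w_lim: "((\<lambda>\<delta>. w (a \<delta>)) \<longlongrightarrow> 0) (at_right 0)"
    using filterlim_compose[OF shifted_solution_tendsto_0 a_at_0] orthogonal_kernel_in_closure_range y_perp
    by (simp add: w_def)
  have "\<forall>\<^sub>F \<delta> in at_right 0. cnorm ip (shifted_inv (a \<delta>) (fd \<delta>) - y) \<le> \<delta> / a \<delta> + w (a \<delta>)"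
    using eventually_at_right_less[of 0]
  proof eventually_elim
    case (elim \<delta>)
    then have "a \<delta> > 0"
      using a_pos by simp
    then show ?case
      using shifted_inv_error_le[of "a \<delta>" y "fd \<delta>"] y_sol fd elim cnorm_minus_commute[of f "fd \<delta>"]
      by (smt (verit, best) divide_right_mono w_def)
  qed
  then have "((\<lambda>\<delta>. cnorm ip (shifted_inv (a \<delta>) (fd \<delta>) - y)) \<longlongrightarrow> 0) (at_right 0)"
    by (intro Lim_null_comparison[OF _ tendsto_add_zero[OF da_lim w_lim]]) (simp add: cnorm_nonneg)
  moreover have "\<forall>\<delta>>0. \<exists>!u. u \<in> D \<and> shifted (a \<delta>) u = fd \<delta>"
    using shifted_ex1 a_pos by (simp add: less_imp_neq[symmetric])
  ultimately show ?thesis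
    unfolding shifted_inv_def shifted_def by blast
qed

end
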